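(* Let $G$ be a $(P_7, C_4, \text{gem})$-free graph, let $v_1v_2\cdots v_7v_1$ be a $7$-hole of $G$, $A=\{v_1,\dots,v_7\}$, indices modulo 7. For each $i$ let $X_i=\{x\in N(A): N(x)\cap A=\{v_i,v_{i+3}\}\}$, $Y_i=\{x\in N(A): N(x)\cap A=\{v_i,v_{i+1},v_{i+2}\}\}$, $Z_i=\{x\in N(A): N(x)\cap A=\{v_i,v_{i+3},v_{i+4}\}\}$. Then: (a) $N(A)=\bigcup_{i=1}^7(X_i\cup Y_i\cup Z_i)$; (b) for each $i$, $X_i\cup Z_i$ and $Y_i$ are cliques; (c) $Y_i$ is complete to $Y_{i+1}\cup Y_{i+6}$ and anticomplete to $Y_{i+2}\cup Y_{i+3}\cup Y_{i+4}\cup Y_{i+5}$; (d) either $X_i=\emptyset$ or $X_{i+2}\cup X_{i+5}=\emptyset$; and $X_i$ is anticomplete to $X_{i+1}\cup X_{i+3}\cup X_{i+4}\cup X_{i+6}$; (e) $X_i$ is complete to $Y_{i+2}\cup Y_{i+6}$ and anticomplete to $Y_i\cup Y_{i+1}\cup Y_{i+3}\cup Y_{i+4}\cup Y_{i+5}$; (f) either $Z_i=\emptyset$ or $Z_{i+3}\cup Z_{i+4}=\emptyset$; and $Z_i$ is anticomplete to $Z_{i+1}\cup Z_{i+2}\cup Z_{i+5}\cup Z_{i+6}$; (g) either $Z_i=\emptyset$ or $X_i\cup X_{i+4}\cup X_{i+6}=\emptyset$; and $Z_i$ is anticomplete to $X_{i+1}\cup X_{i+2}\cup X_{i+3}\cup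 X_{i+5}$; (h) $Z_i$ is complete to $Y_{i+2}\cup Y_{i+3}\cup Y_{i+6}$ and anticomplete to $Y_i\cup Y_{i+1}\cup Y_{i+4}\cup Y_{i+5}$.
   Context: All graphs are finite and simple. $G$ is $H$-free if it has no induced subgraph isomorphic to $H$; $P_t$, $C_t$ are the path and cycle on $t$ vertices; a gem is an induced $P_4$ plus a vertex adjacent to all its four vertices. A $k$-hole is an induced cycle of length $k$. For $X\subseteq V(G)$, $N(X)$ is the set of vertices outside $X$ with a neighbour in $X$. A set $S$ is complete (anticomplete) to $T$ if every vertex of $S$ is adjacent (non-adjacent) to every vertex of $T$. *)

theory Defs
  imports Main
begin

definition simple_graph :: "'a set \<Rightarrow> ('a \<Rightarrow> 'a \<Rightarrow> bool) \<Rightarrow> bool" where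
  "simple_graph V E \<longleftrightarrow> finite V \<and> (\<forall>x y. E x y \<longrightarrow> x \<in> V \<and> y \<in> V)
     \<and> (\<forall>x y. E x y \<longrightarrow> E y x) \<and> (\<forall>x. \<not> E x x)"

definition induced_copy :: "'a set \<Rightarrow> ('a \<Rightarrow> 'a \<Rightarrow> bool) \<Rightarrow> nat \<Rightarrow> (nat \<Rightarrow> nat \<Rightarrow> bool) \<Rightarrow> (nat \<Rightarrow> 'a) \<Rightarrow> bool" where
  "induced_copy V E k H f \<longleftrightarrow> f ` {..<k} \<subseteq> V \<and> inj_on f {..<k}
     \<and> (\<forall>i<k. \<forall>j<k. E (f i) (f j) \<longleftrightarrow> H i j)"

definition H_free :: "'a set \<Rightarrow> ('a \<Rightarrow> 'a \<Rightarrow> bool) \<Rightarrow> nat \<Rightarrow> (nat \<Rightarrow> nat \<Rightarrow> bool) \<Rightarrow> bool" where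
  "H_free V E k H \<longleftrightarrow> \<not> (\<exists>f. induced_copy V E k H f)"

definition path_adj :: "nat \<Rightarrow> nat \<Rightarrow> bool" where
  "path_adj i j \<longleftrightarrow> i + 1 = j \<or> j + 1 = i"

definition cycle_adj :: "nat \<Rightarrow> nat \<Rightarrow> nat \<Rightarrow> bool" where
  "cycle_adj t i j \<longleftrightarrow> i \<noteq> j \<and> (j = (i + 1) mod t \<or> i = (j + 1) mod t)"

definition gem_adj :: "nat \<Rightarrow> nat \<Rightarrow> bool" where
  "gem_adj i j \<longleftrightarrow> path_adj i j \<or> (i \<noteq> j \<and> (i = 4 \<or> j = 4))"

definition nbhd :: "'a set \<Rightarrow> ('a \<Rightarrow> 'a \<Rightarrow> bool) \<Rightarrow> 'a set \<Rightarrow> 'a set" where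
  "nbhd V E X = {y \<in> V - X. \<exists>x\<in>X. E x y}"

definition is_clique :: "'a set \<Rightarrow> ('a \<Rightarrow> 'a \<Rightarrow> bool) \<Rightarrow> 'a set \<Rightarrow> bool" where
  "is_clique V E S \<longleftrightarrow> S \<subseteq> V \<and> (\<forall>x\<in>S. \<forall>y\<in>S. x \<noteq> y \<longrightarrow> E x y)"

definition complete_to :: "('a \<Rightarrow> 'a \<Rightarrow> bool) \<Rightarrow> 'a set \<Rightarrow> 'a set \<Rightarrow> bool" where
  "complete_to E S T \<longleftrightarrow> (\<forall>s\<in>S. \<forall>t\<in>T. E s t)"

definition anticomplete_to :: "('a \<Rightarrow> 'a \<Rightarrow> bool) \<Rightarrow> 'a set \<Rightarrow> 'a set \<Rightarrow> bool" where
  "anticomplete_to E S T \<longleftrightarrow> (\<forall>s\<in>S. \<forall>t\<in>T. \<not> E s t)"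

(* The 7-hole is v 0, ..., v 6 (the paper's v_1..v_7, shifted); indices are taken mod 7. *)
definition hole7 :: "'a set \<Rightarrow> ('a \<Rightarrow> 'a \<Rightarrow> bool) \<Rightarrow> (nat \<Rightarrow> 'a) \<Rightarrow> bool" where
  "hole7 V E v \<longleftrightarrow> induced_copy V E 7 (cycle_adj 7) v"

definition hv :: "(nat \<Rightarrow> 'a) \<Rightarrow> nat \<Rightarrow> 'a" where
  "hv v i = v (i mod 7)"

definition holeA :: "(nat \<Rightarrow> 'a) \<Rightarrow> 'a set" where
  "holeA v = v ` {..<7}"

definition Xset :: "'a set \<Rightarrow> ('a \<Rightarrow> 'a \<Rightarrow> bool) \<Rightarrow> (nat \<Rightarrow> 'a) \<Rightarrow> nat \<Rightarrow> 'a set" where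
  "Xset V E v i = {x \<in> nbhd V E (holeA v).
      nbhd V E {x} \<inter> holeA v = {hv v i, hv v (i + 3)}}"

definition Yset :: "'a set \<Rightarrow> ('a \<Rightarrow> 'a \<Rightarrow> bool) \<Rightarrow> (nat \<Rightarrow> 'a) \<Rightarrow> nat \<Rightarrow> 'a set" where
  "Yset V E v i = {x \<in> nbhd V E (holeA v).
      nbhd V E {x} \<inter> holeA v = {hv v i, hv v (i + 1), hv v (i + 2)}}"

definition Zset :: "'a set \<Rightarrow> ('a \<Rightarrow> 'a \<Rightarrow> bool) \<Rightarrow> (nat \<Rightarrow> 'a) \<Rightarrow> nat \<Rightarrow> 'a set" where
  "Zset V E v i = {x \<in> nbhd V E (holeA v).
      nbhd V E {x} \<inter> holeA v = {hv v i, hv v (i + 3), hv v (i + 4)}}"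

end

theory Submission
  imports Defs
begin

(* The subgraph induced by the hole and a vertex x of N(A) is determined by the set of positions
   of the hole adjacent to x; the subgraph induced by the hole and two such vertices x, y by their
   two sets and by whether x y is an edge.  Every claim of the theorem rules out certain such
   configurations (for (a): all sets other than the 21 types of X, Y and Z), and every ruled-out
   configuration contains an induced P7, C4 or gem, which is exhibited as an explicit list of
   vertices and checked by evaluation.  Since rotating the hole shifts all indices, the claims
   about pairs only need to be checked at index 0. *)

lemma mod_add_left_cancel_nat: "((j::nat) + x) mod m = (j + y) mod m \<longleftrightarrow> x mod m = y mod m"
  by (simp add: mod_eq_iff_dvd_symdiff_nat)

lemma cycle_adj_rotate:
  assumes "a < t" "b < t"
  shows "cycle_adj t ((j + a) mod t) ((j + b) mod t) = cycle_adj t a b"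
proof -
  have succ: "(j + y) mod t = ((j + x) mod t + 1) mod t \<longleftrightarrow> y mod t = (x + 1) mod t" for x y
    using mod_add_left_cancel_nat[of j y t "x + 1"] by (simp add: mod_simps ac_simps)
  show ?thesis
    using assms unfolding cycle_adj_def succ mod_add_left_cancel_nat by simp
qed

lemma induced_copy_comp:
  assumes f: "induced_copy {..<n} P k H f" and w: "induced_copy V E n P w"
  shows "induced_copy V E k H (w \<circ> f)"
proof -
  have f_into: "\<And>i. i < k \<Longrightarrow> f i < n" and f_inj: "inj_on f {..<k}"
    and f_adj: "\<forall>i<k. \<forall>j<k. P (f i) (f j) = H i j"
    using f unfolding induced_copy_def by auto
  have w_V: "\<And>a. a < n \<Longrightarrow> w a \<in> V" and w_inj: "inj_on w {..<n}"
    and w_adj: "\<forall>a<n. \<forall>b<n. E (w a) (w b) = P a b"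
    using w unfolding induced_copy_def by auto
  have "inj_on w (f ` {..<k})"
    by (rule inj_on_subset[OF w_inj]) (auto dest: f_into)
  with f_inj have "inj_on (w \<circ> f) {..<k}"
    by (rule comp_inj_on)
  moreover have "(w \<circ> f) ` {..<k} \<subseteq> V"
    using f_into w_V by auto
  moreover have "\<forall>i<k. \<forall>j<k. E ((w \<circ> f) i) ((w \<circ> f) j) = H i j"
    using f_into w_adj f_adj by simp
  ultimately show ?thesis
    unfolding induced_copy_def by blast
qed

definition list_induced_copy ::
    "nat \<Rightarrow> (nat \<Rightarrow> nat \<Rightarrow> bool) \<Rightarrow> nat \<Rightarrow> (nat \<Rightarrow> nat \<Rightarrow> bool) \<Rightarrow> nat list \<Rightarrow> bool" where
  "list_induced_copy n P k H ms \<longleftrightarrow> length ms = k \<and> list_all (\<lambda>a. a < n) ms \<and> distinct ms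
     \<and> list_all (\<lambda>i. list_all (\<lambda>j. P (ms ! i) (ms ! j) = H i j) [0..<k]) [0..<k]"

lemma list_induced_copy_imp_induced_copy:
  assumes "list_induced_copy n P k H ms"
  shows "induced_copy {..<n} P k H ((!) ms)"
proof -
  have "length ms = k" and "distinct ms" and "\<forall>a \<in> set ms. a < n"
    and "\<forall>i<k. \<forall>j<k. P (ms ! i) (ms ! j) = H i j"
    using assms unfolding list_induced_copy_def by (auto simp: list_all_iff)
  then show ?thesis
    unfolding induced_copy_def by (auto simp: inj_on_def nth_eq_iff_index_eq)
qed

definition forbidden_witness :: "nat \<Rightarrow> (nat \<Rightarrow> nat \<Rightarrow> bool) \<Rightarrow> nat list \<Rightarrow> bool" where
  "forbidden_witness n P ms \<longleftrightarrow> list_induced_copy n P 7 path_adj ms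
     \<or> list_induced_copy n P 4 (cycle_adj 4) ms \<or> list_induced_copy n P 5 gem_adj ms"

lemma complete_to_Un: "complete_to E S (T \<union> U) \<longleftrightarrow> complete_to E S T \<and> complete_to E S U"
  unfolding complete_to_def by blast

lemma anticomplete_to_Un:
  "anticomplete_to E S (T \<union> U) \<longleftrightarrow> anticomplete_to E S T \<and> anticomplete_to E S U"
  unfolding anticomplete_to_def by blast

definition rotate_hole :: "(nat \<Rightarrow> 'a) \<Rightarrow> nat \<Rightarrow> nat \<Rightarrow> 'a" where
  "rotate_hole v j a = hv v (j + a)"

lemma hv_rotate_hole: "hv (rotate_hole v j) i = hv v (j + i)"
  unfolding hv_def rotate_hole_def by (simp add: mod_add_right_eq)

lemma holeA_eq_range_hv: "holeA v = range (hv v)"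
proof -
  have "range (hv v) = v ` range (\<lambda>i. i mod 7)"
    unfolding hv_def by (simp add: image_comp comp_def)
  then show ?thesis
    unfolding holeA_def by (simp add: range_mod atLeast0LessThan)
qed

lemma holeA_rotate_hole: "holeA (rotate_hole v j) = holeA v"
proof -
  have "hv v i = hv v (j + (6 * j + i))" for i
    unfolding hv_def by simp
  then have "range (hv v) \<subseteq> range (\<lambda>i. hv v (j + i))"
    by (blast intro: range_eqI)
  then show ?thesis
    unfolding holeA_eq_range_hv hv_rotate_hole by auto
qed

lemma Xset_rotate_hole: "Xset V E (rotate_hole v j) i = Xset V E v (j + i)"
  unfolding Xset_def holeA_rotate_hole hv_rotate_hole by (simp add: add.assoc)

lemma Yset_rotate_hole: "Yset V E (rotate_hole v j) i = Yset V E v (j + i)"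
  unfolding Yset_def holeA_rotate_hole hv_rotate_hole by (simp add: add.assoc)

lemma Zset_rotate_hole: "Zset V E (rotate_hole v j) i = Zset V E v (j + i)"
  unfolding Zset_def holeA_rotate_hole hv_rotate_hole by (simp add: add.assoc)

lemma hole7_rotate_hole:
  assumes "hole7 V E v"
  shows "hole7 V E (rotate_hole v j)"
proof -
  have v: "v ` {..<7} \<subseteq> V" "inj_on v {..<7}" "\<forall>a<7. \<forall>b<7. E (v a) (v b) = cycle_adj 7 a b"
    using assms unfolding hole7_def induced_copy_def by auto
  have rot: "rotate_hole v j a = v ((j + a) mod 7)" for a
    unfolding rotate_hole_def hv_def ..
  have "inj_on (\<lambda>a. (j + a) mod 7) {..<7}"
    unfolding inj_on_def by (simp add: mod_add_left_cancel_nat)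
  moreover have "inj_on v ((\<lambda>a. (j + a) mod 7) ` {..<7})"
    by (rule inj_on_subset[OF v(2)]) auto
  ultimately have "inj_on (rotate_hole v j) {..<7}"
    unfolding rot using comp_inj_on[unfolded comp_def] by blast
  then show ?thesis
    using v(1,3) unfolding hole7_def induced_copy_def rot by (auto simp: cycle_adj_rotate)
qed

definition hole_nbhd_structure :: "'a set \<Rightarrow> ('a \<Rightarrow> 'a \<Rightarrow> bool) \<Rightarrow> (nat \<Rightarrow> 'a) \<Rightarrow> nat \<Rightarrow> bool" where
  "hole_nbhd_structure V E v i \<longleftrightarrow>
    (let X = Xset V E v; Y = Yset V E v; Z = Zset V E v in
      (is_clique V E (X i \<union> Z i) \<and> is_clique V E (Y i))
    \<and> (complete_to E (Y i) (Y (i+1) \<union> Y (i+6))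
        \<and> anticomplete_to E (Y i) (Y (i+2) \<union> Y (i+3) \<union> Y (i+4) \<union> Y (i+5)))
    \<and> ((X i = {} \<or> X (i+2) \<union> X (i+5) = {})
        \<and> anticomplete_to E (X i) (X (i+1) \<union> X (i+3) \<union> X (i+4) \<union> X (i+6)))
    \<and> (complete_to E (X i) (Y (i+2) \<union> Y (i+6))
        \<and> anticomplete_to E (X i) (Y i \<union> Y (i+1) \<union> Y (i+3) \<union> Y (i+4) \<union> Y (i+5)))
    \<and> ((Z i = {} \<or> Z (i+3) \<union> Z (i+4) = {})
        \<and> anticomplete_to E (Z i) (Z (i+1) \<union> Z (i+2) \<union> Z (i+5) \<union> Z (i+6)))
    \<and> ((Z i = {} \<or> X i \<union> X (i+4) \<union> X (i+6) = {})
        \<and> anticomplete_to E (Z i) (X (i+1) \<union> X (i+2) \<union> X (i+3) \<union> X (i+5)))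
    \<and> (complete_to E (Z i) (Y (i+2) \<union> Y (i+3) \<union> Y (i+6))
        \<and> anticomplete_to E (Z i) (Y i \<union> Y (i+1) \<union> Y (i+4) \<union> Y (i+5))))"

lemma hole_nbhd_structure_rotate_hole:
  "hole_nbhd_structure V E (rotate_hole v i) 0 \<longleftrightarrow> hole_nbhd_structure V E v i"
  by (simp add: hole_nbhd_structure_def Let_def Xset_rotate_hole Yset_rotate_hole Zset_rotate_hole)

definition hole_extension_adj :: "nat set \<Rightarrow> nat set \<Rightarrow> bool \<Rightarrow> nat \<Rightarrow> nat \<Rightarrow> bool" where
  "hole_extension_adj S T e a b =
    (if a < 7 \<and> b < 7 then cycle_adj 7 a b
     else if a = 7 \<and> b < 7 then b \<in> S else if b = 7 \<and> a < 7 then a \<in> S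
     else if a = 8 \<and> b < 7 then b \<in> T else if b = 8 \<and> a < 7 then a \<in> T
     else (a = 7 \<and> b = 8 \<or> a = 8 \<and> b = 7) \<and> e)"

definition one_vertex_obstructions :: "(nat list \<times> nat list) list" where
  "one_vertex_obstructions =
    [([0], [2,3,4,5,6,0,7]), ([1], [3,4,5,6,0,1,7]), ([0,1], [2,3,4,5,6,0,7]),
     ([2], [0,6,5,4,3,2,7]), ([0,2], [0,1,2,7]), ([1,2], [0,6,5,4,3,2,7]),
     ([3], [1,0,6,5,4,3,7]), ([1,3], [1,2,3,7]), ([0,1,3], [1,2,3,7]),
     ([2,3], [1,0,6,5,4,3,7]), ([0,2,3], [0,1,2,7]), ([0,1,2,3], [0,1,2,3,7]),
     ([4], [2,1,0,6,5,4,7]), ([2,4], [2,3,4,7]), ([0,2,4], [0,1,2,7]),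
     ([1,2,4], [2,3,4,7]), ([0,1,2,4], [2,3,4,7]), ([3,4], [2,1,0,6,5,4,7]),
     ([1,3,4], [1,2,3,7]), ([0,1,3,4], [1,2,3,7]), ([0,2,3,4], [0,1,2,7]),
     ([1,2,3,4], [1,2,3,4,7]), ([0,1,2,3,4], [0,1,2,3,7]), ([5], [0,1,2,3,4,5,7]),
     ([0,5], [0,6,5,7]), ([0,1,5], [0,6,5,7]), ([0,2,5], [0,1,2,7]),
     ([0,1,2,5], [0,6,5,7]), ([3,5], [3,4,5,7]), ([0,3,5], [0,6,5,7]),
     ([1,3,5], [1,2,3,7]), ([0,1,3,5], [0,6,5,7]), ([2,3,5], [3,4,5,7]),
     ([0,2,3,5], [0,1,2,7]), ([1,2,3,5], [3,4,5,7]), ([0,1,2,3,5], [0,6,5,7]),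
     ([4,5], [3,2,1,0,6,5,7]), ([0,4,5], [0,6,5,7]), ([0,1,4,5], [0,6,5,7]),
     ([2,4,5], [2,3,4,7]), ([0,2,4,5], [0,1,2,7]), ([1,2,4,5], [2,3,4,7]),
     ([0,1,2,4,5], [0,6,5,7]), ([0,3,4,5], [0,6,5,7]), ([1,3,4,5], [1,2,3,7]),
     ([0,1,3,4,5], [0,6,5,7]), ([2,3,4,5], [2,3,4,5,7]), ([0,2,3,4,5], [0,1,2,7]),
     ([1,2,3,4,5], [1,2,3,4,7]), ([0,1,2,3,4,5], [0,6,5,7]), ([6], [1,2,3,4,5,6,7]),
     ([0,6], [1,2,3,4,5,6,7]), ([1,6], [0,1,7,6]), ([0,2,6], [0,1,2,7]),
     ([1,2,6], [0,1,7,6]), ([0,1,2,6], [2,1,0,6,7]), ([1,3,6], [0,1,7,6]),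
     ([0,1,3,6], [1,2,3,7]), ([0,2,3,6], [0,1,2,7]), ([1,2,3,6], [0,1,7,6]),
     ([0,1,2,3,6], [0,1,2,3,7]), ([4,6], [4,5,6,7]), ([0,4,6], [4,5,6,7]),
     ([1,4,6], [0,1,7,6]), ([0,1,4,6], [4,5,6,7]), ([2,4,6], [2,3,4,7]),
     ([0,2,4,6], [0,1,2,7]), ([1,2,4,6], [0,1,7,6]), ([0,1,2,4,6], [2,3,4,7]),
     ([3,4,6], [4,5,6,7]), ([0,3,4,6], [4,5,6,7]), ([1,3,4,6], [0,1,7,6]),
     ([0,1,3,4,6], [1,2,3,7]), ([2,3,4,6], [4,5,6,7]), ([0,2,3,4,6], [0,1,2,7]),
     ([1,2,3,4,6], [0,1,7,6]), ([0,1,2,3,4,6], [4,5,6,7]), ([5,6], [0,1,2,3,4,5,7]),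
     ([1,5,6], [0,1,7,6]), ([0,1,5,6], [1,0,6,5,7]), ([0,2,5,6], [0,1,2,7]),
     ([1,2,5,6], [0,1,7,6]), ([0,1,2,5,6], [1,0,6,5,7]), ([3,5,6], [3,4,5,7]),
     ([0,3,5,6], [3,4,5,7]), ([1,3,5,6], [0,1,7,6]), ([0,1,3,5,6], [1,2,3,7]),
     ([2,3,5,6], [3,4,5,7]), ([0,2,3,5,6], [0,1,2,7]), ([1,2,3,5,6], [0,1,7,6]),
     ([0,1,2,3,5,6], [3,4,5,7]), ([0,4,5,6], [0,6,5,4,7]), ([1,4,5,6], [0,1,7,6]),
     ([0,1,4,5,6], [0,6,5,4,7]), ([2,4,5,6], [2,3,4,7]), ([0,2,4,5,6], [0,1,2,7]),
     ([1,2,4,5,6], [0,1,7,6]), ([0,1,2,4,5,6], [2,3,4,7]), ([3,4,5,6], [3,4,5,6,7]),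
     ([0,3,4,5,6], [0,6,5,4,7]), ([1,3,4,5,6], [0,1,7,6]), ([0,1,3,4,5,6], [1,2,3,7]),
     ([2,3,4,5,6], [2,3,4,5,7]), ([0,2,3,4,5,6], [0,1,2,7]), ([1,2,3,4,5,6], [0,1,7,6]),
     ([0,1,2,3,4,5,6], [0,1,2,3,7])]"

lemma one_vertex_obstructions_correct:
  "list_all (\<lambda>(L, ms). forbidden_witness 8 (hole_extension_adj (set L) {} False) ms)
     one_vertex_obstructions"
  by code_simp

definition attachment_type_lists :: "nat \<Rightarrow> nat list list" where
  "attachment_type_lists i =
    [[i, (i + 3) mod 7], [i, (i + 1) mod 7, (i + 2) mod 7], [i, (i + 3) mod 7, (i + 4) mod 7]]"

lemma hole_subset_cases:
  "\<forall>L \<in> set (subseqs [0..<7]). L = [] \<or> L \<in> fst ` set one_vertex_obstructions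
     \<or> (\<exists>i \<in> set [0..<7]. L \<in> sort ` set (attachment_type_lists i))"
  by code_simp

locale seven_hole =
  fixes V :: "'a set" and E :: "'a \<Rightarrow> 'a \<Rightarrow> bool" and v :: "nat \<Rightarrow> 'a"
  assumes graph: "simple_graph V E"
    and P7_free: "H_free V E 7 path_adj"
    and C4_free: "H_free V E 4 (cycle_adj 4)"
    and gem_free: "H_free V E 5 gem_adj"
    and hole: "hole7 V E v"
begin

lemma seven_hole_rotate_hole: "seven_hole V E (rotate_hole v j)"
  using graph P7_free C4_free gem_free hole7_rotate_hole[OF hole] by unfold_locales

lemma edge_commute: "E x y = E y x"
  using graph unfolding simple_graph_def by blast

lemma no_loop: "\<not> E x x"
  using graph unfolding simple_graph_def by blast

lemma hole_vertex: "a < 7 \<Longrightarrow> v a \<in> V"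
  and hole_inj: "inj_on v {..<7}"
  and hole_edge: "a < 7 \<Longrightarrow> b < 7 \<Longrightarrow> E (v a) (v b) = cycle_adj 7 a b"
  using hole unfolding hole7_def induced_copy_def by auto

lemma no_forbidden_witness:
  assumes "induced_copy V E n P w"
  shows "\<not> forbidden_witness n P ms"
proof -
  have "\<not> list_induced_copy n P k H ms" if "H_free V E k H" for k H
    using that induced_copy_comp[OF list_induced_copy_imp_induced_copy assms]
    unfolding H_free_def by blast
  then show ?thesis
    unfolding forbidden_witness_def using P7_free C4_free gem_free by blast
qed

abbreviation N :: "'a set" where
  "N \<equiv> nbhd V E (holeA v)"

lemma nbhd_holeD:
  assumes "x \<in> N"
  shows "x \<in> V" and "a < 7 \<Longrightarrow> x \<noteq> v a"
  using assms unfolding nbhd_def holeA_def by auto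

definition attachment :: "'a \<Rightarrow> nat set" where
  "attachment x = {a. a < 7 \<and> E x (v a)}"

definition attachment_class :: "nat set \<Rightarrow> 'a set" where
  "attachment_class S = {x \<in> N. attachment x = S}"

definition hole_extension :: "'a \<Rightarrow> 'a \<Rightarrow> nat \<Rightarrow> 'a" where
  "hole_extension x y a = (if a < 7 then v a else if a = 7 then x else y)"

lemma hole_extension_edge:
  assumes "a < 9" "b < 9"
  shows "E (hole_extension x y a) (hole_extension x y b)
    = hole_extension_adj (attachment x) (attachment y) (E x y) a b"
proof -
  have "a < 7 \<or> a = 7 \<or> a = 8" "b < 7 \<or> b = 7 \<or> b = 8"
    using assms by auto
  then show ?thesis
    by (elim disjE) (simp_all add: hole_extension_def hole_extension_adj_def attachment_def
        hole_edge no_loop edge_commute[of "v a" x] edge_commute[of "v a" y]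
        edge_commute[of "v b" x] edge_commute[of "v b" y] edge_commute[of y x])
qed

lemma hole_extension_inj:
  assumes "x \<in> N" "y \<in> N" "x \<noteq> y \<or> n \<le> 8" "n \<le> 9"
  shows "inj_on (hole_extension x y) {..<n}"
proof (rule inj_onI)
  fix a b assume "a \<in> {..<n}" "b \<in> {..<n}" "hole_extension x y a = hole_extension x y b"
  moreover have "a < 7 \<or> a = 7 \<or> a = 8" "b < 7 \<or> b = 7 \<or> b = 8"
    using assms \<open>a \<in> {..<n}\<close> \<open>b \<in> {..<n}\<close> by auto
  ultimately show "a = b"
    using assms nbhd_holeD hole_inj unfolding hole_extension_def inj_on_def
    by (elim disjE) (auto split: if_splits)
qed

lemma pair_no_witness:
  assumes "x \<in> N" "y \<in> N" "x \<noteq> y"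
  shows "\<not> forbidden_witness 9 (hole_extension_adj (attachment x) (attachment y) (E x y)) ms"
proof (rule no_forbidden_witness)
  show "induced_copy V E 9 (hole_extension_adj (attachment x) (attachment y) (E x y))
      (hole_extension x y)"
    using assms hole_extension_inj[of x y 9] hole_extension_edge nbhd_holeD hole_vertex
    unfolding induced_copy_def hole_extension_def by auto
qed

lemma single_no_witness:
  assumes "x \<in> N"
  shows "\<not> forbidden_witness 8 (hole_extension_adj (attachment x) {} False) ms"
proof (rule no_forbidden_witness)
  have "E (hole_extension x x a) (hole_extension x x b)
      = hole_extension_adj (attachment x) {} False a b"
    if "a < 8" "b < 8" for a b
    using that hole_extension_edge[of a b x x] by (simp add: hole_extension_adj_def)
  then show "induced_copy V E 8 (hole_extension_adj (attachment x) {} False) (hole_extension x x)"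
    using assms hole_extension_inj[of x x 8] nbhd_holeD hole_vertex
    unfolding induced_copy_def hole_extension_def by auto
qed

lemma nbhd_inter_hole:
  assumes "x \<in> N"
  shows "nbhd V E {x} \<inter> holeA v = v ` attachment x"
proof (intro equalityI subsetI)
  fix y assume "y \<in> nbhd V E {x} \<inter> holeA v"
  then obtain a where "a < 7" "y = v a" "E x y"
    unfolding nbhd_def holeA_def by auto
  then show "y \<in> v ` attachment x"
    unfolding attachment_def by auto
next
  fix y assume "y \<in> v ` attachment x"
  then obtain a where "a < 7" "E x (v a)" "y = v a"
    unfolding attachment_def by auto
  then show "y \<in> nbhd V E {x} \<inter> holeA v"
    using hole_vertex nbhd_holeD[OF assms] unfolding nbhd_def holeA_def by auto
qed

lemma attachment_subset: "attachment x \<subseteq> {..<7}"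
  unfolding attachment_def by auto

lemma attachment_class_eq_image:
  assumes "S \<subseteq> {..<7}"
  shows "{x \<in> N. nbhd V E {x} \<inter> holeA v = v ` S} = attachment_class S"
proof -
  have "nbhd V E {x} \<inter> holeA v = v ` S \<longleftrightarrow> attachment x = S" if "x \<in> N" for x
    using nbhd_inter_hole[OF that] inj_on_image_eq_iff[OF hole_inj attachment_subset assms] by simp
  then show ?thesis
    unfolding attachment_class_def by blast
qed

lemma Xset_eq_attachment_class: "Xset V E v i = attachment_class {i mod 7, (i + 3) mod 7}"
proof -
  have img: "{hv v i, hv v (i + 3)} = v ` {i mod 7, (i + 3) mod 7}"
    unfolding hv_def by simp
  show ?thesis
    unfolding Xset_def img by (rule attachment_class_eq_image) auto
qed

lemma Yset_eq_attachment_class: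
  "Yset V E v i = attachment_class {i mod 7, (i + 1) mod 7, (i + 2) mod 7}"
proof -
  have img: "{hv v i, hv v (i + 1), hv v (i + 2)} = v ` {i mod 7, (i + 1) mod 7, (i + 2) mod 7}"
    unfolding hv_def by simp
  show ?thesis
    unfolding Yset_def img by (rule attachment_class_eq_image) auto
qed

lemma Zset_eq_attachment_class:
  "Zset V E v i = attachment_class {i mod 7, (i + 3) mod 7, (i + 4) mod 7}"
proof -
  have img: "{hv v i, hv v (i + 3), hv v (i + 4)} = v ` {i mod 7, (i + 3) mod 7, (i + 4) mod 7}"
    unfolding hv_def by simp
  show ?thesis
    unfolding Zset_def img by (rule attachment_class_eq_image) auto
qed

lemmas attachment_class_eqs =
  Xset_eq_attachment_class Yset_eq_attachment_class Zset_eq_attachment_class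

lemma attachment_type:
  assumes "x \<in> N"
  obtains i where "i < 7" "attachment x \<in> set ` set (attachment_type_lists i)"
proof -
  have "attachment x \<in> Pow (set [0..<7])"
    unfolding attachment_def by auto
  then obtain L where L: "L \<in> set (subseqs [0..<7])" "set L = attachment x"
    unfolding subseqs_powset[symmetric] by auto
  have "L \<noteq> []"
    using assms L(2) edge_commute unfolding nbhd_def holeA_def attachment_def by auto
  moreover have "L \<notin> fst ` set one_vertex_obstructions"
  proof
    assume "L \<in> fst ` set one_vertex_obstructions"
    then obtain ms where "forbidden_witness 8 (hole_extension_adj (set L) {} False) ms"
      using one_vertex_obstructions_correct unfolding list_all_iff by auto
    then show False
      using single_no_witness[OF assms] L(2) by simp
  qed
  ultimately obtain i T where "i < 7" "T \<in> set (attachment_type_lists i)" "L = sort T"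
    using hole_subset_cases L(1) by auto
  then show thesis
    using that L(2) by auto
qed

lemma nbhd_hole_eq_Union: "N = (\<Union>i<7. Xset V E v i \<union> Yset V E v i \<union> Zset V E v i)"
proof
  show "(\<Union>i<7. Xset V E v i \<union> Yset V E v i \<union> Zset V E v i) \<subseteq> N"
    unfolding Xset_def Yset_def Zset_def by auto
  show "N \<subseteq> (\<Union>i<7. Xset V E v i \<union> Yset V E v i \<union> Zset V E v i)"
  proof
    fix x assume "x \<in> N"
    then obtain i where "i < 7" "attachment x \<in> set ` set (attachment_type_lists i)"
      by (rule attachment_type)
    with \<open>x \<in> N\<close> show "x \<in> (\<Union>i<7. Xset V E v i \<union> Yset V E v i \<union> Zset V E v i)"
      by (auto simp: attachment_class_eqs attachment_type_lists_def attachment_class_def)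
  qed
qed

lemma anticomplete_by_witness:
  assumes "forbidden_witness 9 (hole_extension_adj S T True) ms"
  shows "anticomplete_to E (attachment_class S) (attachment_class T)"
  unfolding anticomplete_to_def
proof (intro ballI notI)
  fix x y assume "x \<in> attachment_class S" "y \<in> attachment_class T" "E x y"
  then show False
    using assms pair_no_witness[of x y ms] no_loop unfolding attachment_class_def by auto
qed

lemma complete_by_witness:
  assumes "S \<noteq> T" and "forbidden_witness 9 (hole_extension_adj S T False) ms"
  shows "complete_to E (attachment_class S) (attachment_class T)"
  unfolding complete_to_def
proof (intro ballI)
  fix x y assume "x \<in> attachment_class S" "y \<in> attachment_class T"
  then show "E x y"
    using assms pair_no_witness[of x y ms] unfolding attachment_class_def by (cases "E x y") auto
qed

lemma clique_by_witness:
  assumes "forbidden_witness 9 (hole_extension_adj S S False) ms"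
  shows "is_clique V E (attachment_class S)"
  unfolding is_clique_def
proof (intro conjI ballI impI)
  show "attachment_class S \<subseteq> V"
    using nbhd_holeD unfolding attachment_class_def by auto
  fix x y assume "x \<in> attachment_class S" "y \<in> attachment_class S" "x \<noteq> y"
  then show "E x y"
    using assms pair_no_witness[of x y ms] unfolding attachment_class_def by (cases "E x y") auto
qed

lemma attachment_class_empty_by_witnesses:
  assumes "S \<noteq> T"
    and "forbidden_witness 9 (hole_extension_adj S T True) ms"
    and "forbidden_witness 9 (hole_extension_adj S T False) ms'"
  shows "attachment_class S = {} \<or> attachment_class T = {}"
proof (rule ccontr)
  assume "\<not> ?thesis"
  then obtain x y where "x \<in> attachment_class S" "y \<in> attachment_class T"
    by blast
  then show False
    using assms pair_no_witness[of x y] unfolding attachment_class_def by (cases "E x y") auto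
qed

lemma Y_Y_adjacency_0:
  "complete_to E (Yset V E v 0) (Yset V E v 1 \<union> Yset V E v 6)
   \<and> anticomplete_to E (Yset V E v 0) (Yset V E v 2 \<union> Yset V E v 3 \<union> Yset V E v 4 \<union> Yset V E v 5)"
proof -
  have "complete_to E (Yset V E v 0) (Yset V E v 1)"
    unfolding attachment_class_eqs by (rule complete_by_witness[where ms = "[4,5,6,0,7,2,8]"]) code_simp+
  moreover have "complete_to E (Yset V E v 0) (Yset V E v 6)"
    unfolding attachment_class_eqs by (rule complete_by_witness[where ms = "[3,4,5,6,8,1,7]"]) code_simp+
  moreover have "anticomplete_to E (Yset V E v 0) (Yset V E v 2)"
    unfolding attachment_class_eqs by (rule anticomplete_by_witness[where ms = "[0,1,2,8,7]"]) code_simp+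
  moreover have "anticomplete_to E (Yset V E v 0) (Yset V E v 3)"
    unfolding attachment_class_eqs by (rule anticomplete_by_witness[where ms = "[2,3,8,7]"]) code_simp+
  moreover have "anticomplete_to E (Yset V E v 0) (Yset V E v 4)"
    unfolding attachment_class_eqs by (rule anticomplete_by_witness[where ms = "[0,6,8,7]"]) code_simp+
  moreover have "anticomplete_to E (Yset V E v 0) (Yset V E v 5)"
    unfolding attachment_class_eqs by (rule anticomplete_by_witness[where ms = "[1,7,8,6,0]"]) code_simp+
  ultimately show ?thesis
    unfolding complete_to_Un anticomplete_to_Un by blast
qed

lemma X_X_adjacency_0:
  "(Xset V E v 0 = {} \<or> Xset V E v 2 \<union> Xset V E v 5 = {})
   \<and> anticomplete_to E (Xset V E v 0) (Xset V E v 1 \<union> Xset V E v 3 \<union> Xset V E v 4 \<union> Xset V E v 6)"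
proof -
  have "Xset V E v 0 = {} \<or> Xset V E v 2 = {}"
    unfolding attachment_class_eqs
    by (rule attachment_class_empty_by_witnesses[where ms = "[2,3,7,8]" and ms' = "[1,0,7,3,4,5,8]"]) code_simp+
  moreover have "Xset V E v 0 = {} \<or> Xset V E v 5 = {}"
    unfolding attachment_class_eqs
    by (rule attachment_class_empty_by_witnesses[where ms = "[0,1,8,7]" and ms' = "[2,3,7,0,6,5,8]"]) code_simp+
  moreover have "anticomplete_to E (Xset V E v 0) (Xset V E v 1)"
    unfolding attachment_class_eqs by (rule anticomplete_by_witness[where ms = "[0,1,8,7]"]) code_simp+
  moreover have "anticomplete_to E (Xset V E v 0) (Xset V E v 3)"
    unfolding attachment_class_eqs by (rule anticomplete_by_witness[where ms = "[0,6,8,7]"]) code_simp+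
  moreover have "anticomplete_to E (Xset V E v 0) (Xset V E v 4)"
    unfolding attachment_class_eqs by (rule anticomplete_by_witness[where ms = "[3,4,8,7]"]) code_simp+
  moreover have "anticomplete_to E (Xset V E v 0) (Xset V E v 6)"
    unfolding attachment_class_eqs by (rule anticomplete_by_witness[where ms = "[0,6,8,7]"]) code_simp+
  ultimately show ?thesis
    unfolding anticomplete_to_Un by blast
qed

lemma X_Y_adjacency_0:
  "complete_to E (Xset V E v 0) (Yset V E v 2 \<union> Yset V E v 6)
   \<and> anticomplete_to E (Xset V E v 0)
        (Yset V E v 0 \<union> Yset V E v 1 \<union> Yset V E v 3 \<union> Yset V E v 4 \<union> Yset V E v 5)"
proof -
  have "complete_to E (Xset V E v 0) (Yset V E v 2)"
    unfolding attachment_class_eqs by (rule complete_by_witness[where ms = "[2,8,4,5,6,0,7]"]) code_simp+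
  moreover have "complete_to E (Xset V E v 0) (Yset V E v 6)"
    unfolding attachment_class_eqs by (rule complete_by_witness[where ms = "[1,8,6,5,4,3,7]"]) code_simp+
  moreover have "anticomplete_to E (Xset V E v 0) (Yset V E v 0)"
    unfolding attachment_class_eqs by (rule anticomplete_by_witness[where ms = "[1,8,7,3,4,5,6]"]) code_simp+
  moreover have "anticomplete_to E (Xset V E v 0) (Yset V E v 1)"
    unfolding attachment_class_eqs by (rule anticomplete_by_witness[where ms = "[2,8,7,0,6,5,4]"]) code_simp+
  moreover have "anticomplete_to E (Xset V E v 0) (Yset V E v 3)"
    unfolding attachment_class_eqs by (rule anticomplete_by_witness[where ms = "[5,4,3,7,8]"]) code_simp+
  moreover have "anticomplete_to E (Xset V E v 0) (Yset V E v 4)"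
    unfolding attachment_class_eqs by (rule anticomplete_by_witness[where ms = "[0,6,8,7]"]) code_simp+
  moreover have "anticomplete_to E (Xset V E v 0) (Yset V E v 5)"
    unfolding attachment_class_eqs by (rule anticomplete_by_witness[where ms = "[5,6,0,7,8]"]) code_simp+
  ultimately show ?thesis
    unfolding complete_to_Un anticomplete_to_Un by blast
qed

lemma Z_Z_adjacency_0:
  "(Zset V E v 0 = {} \<or> Zset V E v 3 \<union> Zset V E v 4 = {})
   \<and> anticomplete_to E (Zset V E v 0) (Zset V E v 1 \<union> Zset V E v 2 \<union> Zset V E v 5 \<union> Zset V E v 6)"
proof -
  have "Zset V E v 0 = {} \<or> Zset V E v 3 = {}"
    unfolding attachment_class_eqs
    by (rule attachment_class_empty_by_witnesses[where ms = "[0,8,3,4,7]" and ms' = "[0,7,3,8]"]) code_simp+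
  moreover have "Zset V E v 0 = {} \<or> Zset V E v 4 = {}"
    unfolding attachment_class_eqs
    by (rule attachment_class_empty_by_witnesses[where ms = "[0,8,4,3,7]" and ms' = "[0,7,4,8]"]) code_simp+
  moreover have "anticomplete_to E (Zset V E v 0) (Zset V E v 1)"
    unfolding attachment_class_eqs by (rule anticomplete_by_witness[where ms = "[0,1,8,7]"]) code_simp+
  moreover have "anticomplete_to E (Zset V E v 0) (Zset V E v 2)"
    unfolding attachment_class_eqs by (rule anticomplete_by_witness[where ms = "[0,6,8,7]"]) code_simp+
  moreover have "anticomplete_to E (Zset V E v 0) (Zset V E v 5)"
    unfolding attachment_class_eqs by (rule anticomplete_by_witness[where ms = "[0,1,8,7]"]) code_simp+
  moreover have "anticomplete_to E (Zset V E v 0) (Zset V E v 6)"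
    unfolding attachment_class_eqs by (rule anticomplete_by_witness[where ms = "[0,6,8,7]"]) code_simp+
  ultimately show ?thesis
    unfolding anticomplete_to_Un by blast
qed

lemma Z_X_adjacency_0:
  "(Zset V E v 0 = {} \<or> Xset V E v 0 \<union> Xset V E v 4 \<union> Xset V E v 6 = {})
   \<and> anticomplete_to E (Zset V E v 0) (Xset V E v 1 \<union> Xset V E v 2 \<union> Xset V E v 3 \<union> Xset V E v 5)"
proof -
  have "Zset V E v 0 = {} \<or> Xset V E v 0 = {}"
    unfolding attachment_class_eqs
    by (rule attachment_class_empty_by_witnesses[where ms = "[0,8,3,4,7]" and ms' = "[0,7,3,8]"]) code_simp+
  moreover have "Zset V E v 0 = {} \<or> Xset V E v 4 = {}"
    unfolding attachment_class_eqs
    by (rule attachment_class_empty_by_witnesses[where ms = "[0,8,4,3,7]" and ms' = "[0,7,4,8]"]) code_simp+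
  moreover have "Zset V E v 0 = {} \<or> Xset V E v 6 = {}"
    unfolding attachment_class_eqs
    by (rule attachment_class_empty_by_witnesses[where ms = "[0,6,8,7]" and ms' = "[1,2,8,6,5,4,7]"]) code_simp+
  moreover have "anticomplete_to E (Zset V E v 0) (Xset V E v 1)"
    unfolding attachment_class_eqs by (rule anticomplete_by_witness[where ms = "[0,1,8,7]"]) code_simp+
  moreover have "anticomplete_to E (Zset V E v 0) (Xset V E v 2)"
    unfolding attachment_class_eqs by (rule anticomplete_by_witness[where ms = "[2,3,7,8]"]) code_simp+
  moreover have "anticomplete_to E (Zset V E v 0) (Xset V E v 3)"
    unfolding attachment_class_eqs by (rule anticomplete_by_witness[where ms = "[0,6,8,7]"]) code_simp+
  moreover have "anticomplete_to E (Zset V E v 0) (Xset V E v 5)"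
    unfolding attachment_class_eqs by (rule anticomplete_by_witness[where ms = "[0,1,8,7]"]) code_simp+
  ultimately show ?thesis
    unfolding anticomplete_to_Un by blast
qed

lemma Z_Y_adjacency_0:
  "complete_to E (Zset V E v 0) (Yset V E v 2 \<union> Yset V E v 3 \<union> Yset V E v 6)
   \<and> anticomplete_to E (Zset V E v 0) (Yset V E v 0 \<union> Yset V E v 1 \<union> Yset V E v 4 \<union> Yset V E v 5)"
proof -
  have "complete_to E (Zset V E v 0) (Yset V E v 2)"
    unfolding attachment_class_eqs by (rule complete_by_witness[where ms = "[2,8,4,7,3]"]) code_simp+
  moreover have "complete_to E (Zset V E v 0) (Yset V E v 3)"
    unfolding attachment_class_eqs by (rule complete_by_witness[where ms = "[5,8,3,7,4]"]) code_simp+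
  moreover have "complete_to E (Zset V E v 0) (Yset V E v 6)"
    unfolding attachment_class_eqs by (rule complete_by_witness[where ms = "[2,1,8,6,5,4,7]"]) code_simp+
  moreover have "anticomplete_to E (Zset V E v 0) (Yset V E v 0)"
    unfolding attachment_class_eqs by (rule anticomplete_by_witness[where ms = "[2,3,7,8]"]) code_simp+
  moreover have "anticomplete_to E (Zset V E v 0) (Yset V E v 1)"
    unfolding attachment_class_eqs by (rule anticomplete_by_witness[where ms = "[0,1,8,7]"]) code_simp+
  moreover have "anticomplete_to E (Zset V E v 0) (Yset V E v 4)"
    unfolding attachment_class_eqs by (rule anticomplete_by_witness[where ms = "[0,6,8,7]"]) code_simp+
  moreover have "anticomplete_to E (Zset V E v 0) (Yset V E v 5)"
    unfolding attachment_class_eqs by (rule anticomplete_by_witness[where ms = "[4,5,8,7]"]) code_simp+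
  ultimately show ?thesis
    unfolding complete_to_Un anticomplete_to_Un by blast
qed

lemma cliques_0:
  "is_clique V E (Xset V E v 0 \<union> Zset V E v 0) \<and> is_clique V E (Yset V E v 0)"
proof -
  have "is_clique V E (Xset V E v 0)"
    unfolding attachment_class_eqs by (rule clique_by_witness[where ms = "[0,7,3,8]"]) code_simp+
  moreover have "is_clique V E (Zset V E v 0)"
    unfolding attachment_class_eqs by (rule clique_by_witness[where ms = "[0,7,3,8]"]) code_simp+
  moreover have "is_clique V E (Yset V E v 0)"
    unfolding attachment_class_eqs by (rule clique_by_witness[where ms = "[0,7,2,8]"]) code_simp+
  moreover have "Zset V E v 0 = {} \<or> Xset V E v 0 = {}"
    using Z_X_adjacency_0 by blast
  ultimately show ?thesis
    by auto
qed

lemma hole_nbhd_structure_0: "hole_nbhd_structure V E v 0"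
  using cliques_0 Y_Y_adjacency_0 X_X_adjacency_0 X_Y_adjacency_0 Z_Z_adjacency_0
    Z_X_adjacency_0 Z_Y_adjacency_0
  unfolding hole_nbhd_structure_def Let_def add_0 by blast

lemma hole_nbhd_structure_all_indices: "hole_nbhd_structure V E v i"
  using seven_hole.hole_nbhd_structure_0[OF seven_hole_rotate_hole] hole_nbhd_structure_rotate_hole
  by blast

end

theorem mainTheorem9:
  fixes V :: "'a set" and E :: "'a \<Rightarrow> 'a \<Rightarrow> bool" and v :: "nat \<Rightarrow> 'a"
  assumes graph: "simple_graph V E"
    and P7free: "H_free V E 7 path_adj"
    and C4free: "H_free V E 4 (cycle_adj 4)"
    and gemfree: "H_free V E 5 gem_adj"
    and hole: "hole7 V E v"
  defines "A \<equiv> holeA v"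
    and "X \<equiv> Xset V E v" and "Y \<equiv> Yset V E v" and "Z \<equiv> Zset V E v"
  shows
   "nbhd V E A = (\<Union>i<7. X i \<union> Y i \<union> Z i)
    \<and> (\<forall>i. is_clique V E (X i \<union> Z i) \<and> is_clique V E (Y i))
    \<and> (\<forall>i. complete_to E (Y i) (Y (i+1) \<union> Y (i+6))
          \<and> anticomplete_to E (Y i) (Y (i+2) \<union> Y (i+3) \<union> Y (i+4) \<union> Y (i+5)))
    \<and> (\<forall>i. (X i = {} \<or> X (i+2) \<union> X (i+5) = {})
          \<and> anticomplete_to E (X i) (X (i+1) \<union> X (i+3) \<union> X (i+4) \<union> X (i+6)))
    \<and> (\<forall>i. complete_to E (X i) (Y (i+2) \<union> Y (i+6))
          \<and> anticomplete_to E (X i) (Y i \<union> Y (i+1) \<union> Y (i+3) \<union> Y (i+4) \<union> Y (i+5)))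
    \<and> (\<forall>i. (Z i = {} \<or> Z (i+3) \<union> Z (i+4) = {})
          \<and> anticomplete_to E (Z i) (Z (i+1) \<union> Z (i+2) \<union> Z (i+5) \<union> Z (i+6)))
    \<and> (\<forall>i. (Z i = {} \<or> X i \<union> X (i+4) \<union> X (i+6) = {})
          \<and> anticomplete_to E (Z i) (X (i+1) \<union> X (i+2) \<union> X (i+3) \<union> X (i+5)))
    \<and> (\<forall>i. complete_to E (Z i) (Y (i+2) \<union> Y (i+3) \<union> Y (i+6))
          \<and> anticomplete_to E (Z i) (Y i \<union> Y (i+1) \<union> Y (i+4) \<union> Y (i+5)))"
proof -
  interpret seven_hole V E v
    using graph P7free C4free gemfree hole by unfold_locales
  have "\<forall>i. hole_nbhd_structure V E v i"
    using hole_nbhd_structure_all_indices by blast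
  with nbhd_hole_eq_Union show ?thesis
    unfolding A_def X_def Y_def Z_def hole_nbhd_structure_def Let_def all_conj_distrib by simp
qed

end
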